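(* Fix constants $\mu>0$, $\beta_0>0$, $\gamma_0>0$ and effectiveness parameters $\beta_e\ge 0$, $\gamma_e\ge 0$. Let $F_{\beta_0}:[0,1]\to(0,\infty)$, $u\mapsto F_{\beta_0}(u)$, be a transmission-rate production function and $F_{\gamma_0}$, $u\mapsto F_{\gamma_0}(1-u)$, a recovery-rate production function, where $F_{\beta_0}$ is a strictly decreasing function of $u$ and $F_{\gamma_0}(1-u)$ is a strictly increasing function of $1-u$, both positive on $[0,1]$ and twice differentiable on $(0,1)$. Suppose that each of $F_{\beta_0}$ and $F_{\gamma_0}$ has either increasing or constant returns to scale (in the sense defined in the context; the two may be of different types). Define $$\mathcal{R}_0^c(u)=\frac{F_{\beta_0}(u)}{F_{\gamma_0}(1-u)+\mu},\qquad I^*(u)=\mu\left(\frac{1}{F_{\gamma_0}(1-u)+\mu}-\frac{1}{F_{\beta_0}(u)}\right),$$ and suppose $\mathcal{R}_0^c(u)>1$ for all $u\in[0,1]$ (the region of the asymptotically stable endemic state). Then the minimum of $I^*$ over $[0,1]$ is not attained at any point of $(0,1)$; i.e., the optimal fraction of resources $u^*_{\rm long}$ minimizing $I^*$ takes only the extreme values $0$ or $1$. Moreover, for given $\beta_e,\gamma_e$, the optimal fraction $u^*_{\rm long}$ is the same for all these combinations of return types (increasing/increasing, constant/constant, increasing/constant, constant/increasing), provided the production functions of different return types agree at the endpoints as described in the context.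
   Context: This is a Susceptible–Infected–Recovered model $S'=\mu-F_{\beta_0}(u)SI-\mu S$, $I'=F_{\beta_0}(u)SI-F_{\gamma_0}(1-u)I-\mu I$, $R'=F_{\gamma_0}(1-u)I-\mu R$, where a fraction $u\in[0,1]$ of a fixed budget is invested in transmission reduction and $1-u$ in recovery improvement; the baseline transmission and recovery rates are $\beta_0$ and $\gamma_0$, and $\beta_e,\gamma_e$ measure the effectiveness of the two interventions. When $\mathcal{R}_0^c>1$ the endemic equilibrium has infected fraction $I^*=\frac{\mu}{F_{\beta_0}}(\mathcal{R}_0^c-1)$, which equals the formula in the claim. Returns to scale: $F_{\beta_0}$ has constant returns if it is linear (decreasing) in $u$, and increasing returns if it is concave and decreasing in $u$ ($F_{\beta_0}'<0$, $F_{\beta_0}''\le 0$); $F_{\gamma_0}(1-u)$ has constant returns if it is linear (increasing) in $1-u$, and increasing returns if it is convex and increasing in $1-u$ (equivalently, as a function of $u$: $\frac{d}{du}F_{\gamma_0}(1-u)<0$, $\frac{d^2}{du^2}F_{\gamma_0}(1-u)\ge 0$). For fixed $\beta_e,\gamma_e$, the production functions of the different return types for $F_{\beta_0}$ are assumed to take identical values at $u=0$ and at $u=1$, and likewise for $F_{\gamma_0}$ (e.g. $F_{\beta_0}(u)=\beta_0(1-\frac{\beta_e u^2}{1+\beta_e})$ or $\beta_0(1-\frac{\beta_e u}{1+\beta_e})$, and $F_{\gamma_0}(1-u)=\gamma_0(1+\gamma_e)^{1-u}$ or $\gamma_0(1+\gamma_e(1-u))$). *)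

theory Defs
  imports "HOL-Analysis.Analysis"
begin

text \<open>F stands for the transmission production function u \<mapsto> F_beta0(u);
 Fg stands for the recovery production function F_gamma0, applied as Fg (1 - u).\<close>

definition twice_diff_on :: "(real \<Rightarrow> real) \<Rightarrow> real set \<Rightarrow> bool" where
  "twice_diff_on f S \<longleftrightarrow> (\<forall>x\<in>S. f differentiable (at x) \<and> deriv f differentiable (at x))"

definition trans_constant_returns :: "(real \<Rightarrow> real) \<Rightarrow> bool" where
  "trans_constant_returns F \<longleftrightarrow> (\<exists>a b. b < 0 \<and> (\<forall>u\<in>{0..1}. F u = a + b * u))"

definition trans_increasing_returns :: "(real \<Rightarrow> real) \<Rightarrow> bool" where
  "trans_increasing_returns F \<longleftrightarrow>
     (\<forall>u\<in>{0<..<1}. deriv F u < 0 \<and> deriv (deriv F) u \<le> 0)"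

definition recov_constant_returns :: "(real \<Rightarrow> real) \<Rightarrow> bool" where
  "recov_constant_returns Fg \<longleftrightarrow> (\<exists>a b. b > 0 \<and> (\<forall>u\<in>{0..1}. Fg (1 - u) = a + b * (1 - u)))"

definition recov_increasing_returns :: "(real \<Rightarrow> real) \<Rightarrow> bool" where
  "recov_increasing_returns Fg \<longleftrightarrow>
     (\<forall>u\<in>{0<..<1}. deriv (\<lambda>x. Fg (1 - x)) u < 0 \<and> deriv (deriv (\<lambda>x. Fg (1 - x))) u \<ge> 0)"

definition admissible_transmission :: "(real \<Rightarrow> real) \<Rightarrow> bool" where
  "admissible_transmission F \<longleftrightarrow>
     (\<forall>u\<in>{0..1}. F u > 0) \<and>
     (\<forall>u\<in>{0..1}. \<forall>v\<in>{0..1}. u < v \<longrightarrow> F v < F u) \<and>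
     continuous_on {0..1} F \<and> twice_diff_on F {0<..<1} \<and>
     (trans_increasing_returns F \<or> trans_constant_returns F)"

definition admissible_recovery :: "(real \<Rightarrow> real) \<Rightarrow> bool" where
  "admissible_recovery Fg \<longleftrightarrow>
     (\<forall>u\<in>{0..1}. Fg (1 - u) > 0) \<and>
     (\<forall>u\<in>{0..1}. \<forall>v\<in>{0..1}. (1 - u) < (1 - v) \<longrightarrow> Fg (1 - u) < Fg (1 - v)) \<and>
     continuous_on {0..1} (\<lambda>u. Fg (1 - u)) \<and> twice_diff_on (\<lambda>u. Fg (1 - u)) {0<..<1} \<and>
     (recov_increasing_returns Fg \<or> recov_constant_returns Fg)"

definition R0c :: "real \<Rightarrow> (real \<Rightarrow> real) \<Rightarrow> (real \<Rightarrow> real) \<Rightarrow> real \<Rightarrow> real" where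
  "R0c \<mu> F Fg u = F u / (Fg (1 - u) + \<mu>)"

definition Istar :: "real \<Rightarrow> (real \<Rightarrow> real) \<Rightarrow> (real \<Rightarrow> real) \<Rightarrow> real \<Rightarrow> real" where
  "Istar \<mu> F Fg u = \<mu> * (1 / (Fg (1 - u) + \<mu>) - 1 / F u)"

definition opt_long :: "real \<Rightarrow> (real \<Rightarrow> real) \<Rightarrow> (real \<Rightarrow> real) \<Rightarrow> real set" where
  "opt_long \<mu> F Fg = {u\<in>{0..1}. \<forall>v\<in>{0..1}. Istar \<mu> F Fg u \<le> Istar \<mu> F Fg v}"

end

theory Submission
  imports Defs
begin

text \<open>
  Write \<open>I* = \<mu> (1/Q - 1/P)\<close> with \<open>P = F_\<beta>0(u)\<close> and \<open>Q = F_\<gamma>0(1-u) + \<mu>\<close>, so that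
  \<open>R0c > 1\<close> means \<open>Q < P\<close>. Both returns-to-scale types give \<open>P' < 0, P'' \<le> 0\<close> and
  \<open>Q' < 0, Q'' \<ge> 0\<close>. At an interior critical point \<open>P'/P^2 = Q'/Q^2 = c \<noteq> 0\<close>, and then
  \<open>(1/Q - 1/P)'' = P''/P^2 - Q''/Q^2 + 2c^2 (Q - P) < 0\<close>, so no interior point minimises \<open>I*\<close>.
  By continuity the minimum over \<open>[0,1]\<close> is attained, hence at \<open>0\<close> or \<open>1\<close>, and which endpoint
  wins depends only on the values of the production functions at the endpoints.
\<close>

lemma DERIV_local_min_nhds:
  fixes f :: "real \<Rightarrow> real"
  assumes "(f has_real_derivative l) (at x)" and "\<forall>\<^sub>F y in nhds x. f x \<le> f y"
  shows "l = 0"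
proof -
  obtain d where "d > 0" and "\<And>y. dist y x < d \<Longrightarrow> f x \<le> f y"
    using assms(2) unfolding eventually_nhds_metric by blast
  then show ?thesis
    by (intro DERIV_local_min[OF assms(1), of d]) (auto simp: dist_real_def abs_minus_commute)
qed

lemma DERIV_local_min_second_deriv_nonneg:
  fixes f f' :: "real \<Rightarrow> real"
  assumes deriv: "\<forall>\<^sub>F y in nhds x. (f has_real_derivative f' y) (at y)"
    and deriv2: "(f' has_real_derivative L) (at x)"
    and min: "\<forall>\<^sub>F y in nhds x. f x \<le> f y"
  shows "0 \<le> L"
proof (rule ccontr)
  assume "\<not> 0 \<le> L"
  then have "L < 0" by simp
  obtain d where "d > 0"
    and d: "\<And>y. dist y x < d \<Longrightarrow> (f has_real_derivative f' y) (at y) \<and> f x \<le> f y"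
    using eventually_conj[OF deriv min] unfolding eventually_nhds_metric by blast
  have "f' x = 0"
    using DERIV_local_min_nhds d[of x] \<open>d > 0\<close> min by simp
  obtain e where "e > 0" and dec: "\<And>h. 0 < h \<Longrightarrow> h < e \<Longrightarrow> f' (x + h) < f' x"
    using DERIV_neg_dec_right[OF deriv2 \<open>L < 0\<close>] by blast
  define h where "h = min d e / 2"
  have h: "0 < h" "h < d" "h < e" using \<open>d > 0\<close> \<open>e > 0\<close> by (auto simp: h_def)
  obtain z where z: "x < z" "z < x + h" and mvt: "f (x + h) - f x = h * f' z"
    using MVT2[of x "x + h" f f'] h d by (auto simp: dist_real_def)
  have "f' z < 0" using dec[of "z - x"] z h \<open>f' x = 0\<close> by simp
  with \<open>h > 0\<close> have "h * f' z < 0" by (rule mult_pos_neg)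
  moreover have "f x \<le> f (x + h)" using d[of "x + h"] h by (simp add: dist_real_def)
  ultimately show False using mvt by simp
qed

lemma deriv_affine_on_interval:
  fixes f :: "real \<Rightarrow> real"
  assumes affine: "\<And>x. x \<in> {a..b} \<Longrightarrow> f x = c + d * x" and x: "x \<in> {a<..<b}"
  shows "deriv f x = d" and "deriv (deriv f) x = 0"
proof -
  have slope: "deriv f y = d" if "y \<in> {a<..<b}" for y
  proof -
    have "\<forall>\<^sub>F z in nhds y. f z = c + d * z"
      using eventually_nhds_in_open[OF open_greaterThanLessThan that]
      by (auto elim!: eventually_mono simp: affine)
    then have "deriv f y = deriv (\<lambda>z. c + d * z) y" by (rule deriv_cong_ev) simp
    also have "\<dots> = d" by (rule DERIV_imp_deriv) (auto intro!: derivative_eq_intros)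
    finally show ?thesis .
  qed
  then show "deriv f x = d" using x .
  have "\<forall>\<^sub>F y in nhds x. deriv f y = d"
    using eventually_nhds_in_open[OF open_greaterThanLessThan x] by (auto elim!: eventually_mono simp: slope)
  then have "deriv (deriv f) x = deriv (\<lambda>_. d) x" by (rule deriv_cong_ev) simp
  then show "deriv (deriv f) x = 0" by simp
qed

lemma reciprocal_difference_no_interior_min:
  fixes P Q P' Q' :: "real \<Rightarrow> real"
  assumes "open S" "u \<in> S"
    and dP: "\<And>x. x \<in> S \<Longrightarrow> (P has_real_derivative P' x) (at x)"
    and dQ: "\<And>x. x \<in> S \<Longrightarrow> (Q has_real_derivative Q' x) (at x)"
    and dP': "(P' has_real_derivative P'') (at u)"
    and dQ': "(Q' has_real_derivative Q'') (at u)"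
    and "P'' \<le> 0" "0 \<le> Q''" "Q' u \<noteq> 0"
    and Q_pos: "\<And>x. x \<in> S \<Longrightarrow> 0 < Q x" and Q_less_P: "\<And>x. x \<in> S \<Longrightarrow> Q x < P x"
  shows "\<exists>v\<in>S. 1 / Q v - 1 / P v < 1 / Q u - 1 / P u"
proof (rule ccontr)
  have near_u: "\<forall>\<^sub>F x in nhds u. x \<in> S"
    using eventually_nhds_in_open[OF \<open>open S\<close> \<open>u \<in> S\<close>] .
  assume "\<not> ?thesis"
  then have local_min: "\<forall>\<^sub>F v in nhds u. 1 / Q u - 1 / P u \<le> 1 / Q v - 1 / P v"
    using near_u by (auto elim!: eventually_mono simp: not_less)
  define h' where "h' x = P' x / (P x)\<^sup>2 - Q' x / (Q x)\<^sup>2" for x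
  have "((\<lambda>x. 1 / Q x - 1 / P x) has_real_derivative h' x) (at x)" if "x \<in> S" for x
    using Q_pos[OF that] Q_less_P[OF that] unfolding h'_def
    by (auto intro!: derivative_eq_intros dP dQ that simp: field_simps power2_eq_square)
  then have deriv: "\<forall>\<^sub>F x in nhds u. ((\<lambda>x. 1 / Q x - 1 / P x) has_real_derivative h' x) (at x)"
    using near_u by (auto elim!: eventually_mono)
  define p q where "p = P u" and "q = Q u"
  have "0 < q" "q < p" using Q_pos Q_less_P \<open>u \<in> S\<close> by (auto simp: p_def q_def)
  define L where "L = P'' / p\<^sup>2 - 2 * (P' u)\<^sup>2 / p ^ 3 - Q'' / q\<^sup>2 + 2 * (Q' u)\<^sup>2 / q ^ 3"
  have "(h' has_real_derivative L) (at u)"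
    using \<open>0 < q\<close> \<open>q < p\<close> unfolding h'_def L_def p_def q_def
    by (auto intro!: derivative_eq_intros dP dQ dP' dQ' \<open>u \<in> S\<close> simp: field_simps power2_eq_square power3_eq_cube)
  then have "0 \<le> L"
    using DERIV_local_min_second_deriv_nonneg[OF deriv _ local_min] by blast
  have "h' u = 0"
    using DERIV_local_min_nhds[OF _ local_min] deriv[THEN eventually_nhds_x_imp_x] by blast
  define c where "c = Q' u / q\<^sup>2"
  have "P' u = c * p\<^sup>2" "Q' u = c * q\<^sup>2" "c \<noteq> 0"
    using \<open>h' u = 0\<close> \<open>Q' u \<noteq> 0\<close> \<open>0 < q\<close> \<open>q < p\<close> by (auto simp: h'_def c_def p_def q_def field_simps)
  then have "L = P'' / p\<^sup>2 - Q'' / q\<^sup>2 + 2 * c\<^sup>2 * (q - p)"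
    using \<open>0 < q\<close> \<open>q < p\<close> unfolding L_def by (simp add: field_simps power2_eq_square power3_eq_cube)
  also have "\<dots> \<le> 2 * c\<^sup>2 * (q - p)"
    using \<open>P'' \<le> 0\<close> \<open>0 \<le> Q''\<close> by (smt (verit) divide_nonneg_nonneg divide_nonpos_nonneg zero_le_power2)
  also have "\<dots> < 0"
    using \<open>c \<noteq> 0\<close> \<open>q < p\<close> by (simp add: mult_pos_neg)
  finally show False using \<open>0 \<le> L\<close> by simp
qed

lemma minimizers_at_endpoints:
  fixes f :: "real \<Rightarrow> real"
  assumes "a \<le> b" "continuous_on {a..b} f"
    and no_interior_min: "\<And>u. u \<in> {a<..<b} \<Longrightarrow> \<exists>v\<in>{a..b}. f v < f u"
  shows "{u\<in>{a..b}. \<forall>v\<in>{a..b}. f u \<le> f v} = {u\<in>{a, b}. f u \<le> f a \<and> f u \<le> f b}"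
proof -
  have endpoint: "u \<in> {a, b}" if "u \<in> {a..b}" "\<forall>v\<in>{a..b}. f u \<le> f v" for u
    using that no_interior_min[of u] by (force simp: not_less)
  obtain m where m: "m \<in> {a..b}" "\<forall>v\<in>{a..b}. f m \<le> f v"
    using continuous_attains_inf[OF compact_Icc _ assms(2)] \<open>a \<le> b\<close> by auto
  then have "m \<in> {a, b}" by (rule endpoint)
  show ?thesis
  proof (intro set_eqI iffI)
    fix u assume "u \<in> {u\<in>{a..b}. \<forall>v\<in>{a..b}. f u \<le> f v}"
    with endpoint \<open>a \<le> b\<close> show "u \<in> {u\<in>{a, b}. f u \<le> f a \<and> f u \<le> f b}" by auto
  next
    fix u assume u: "u \<in> {u\<in>{a, b}. f u \<le> f a \<and> f u \<le> f b}"
    with \<open>m \<in> {a, b}\<close> have "f u \<le> f m" by auto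
    with m(2) u \<open>a \<le> b\<close> show "u \<in> {u\<in>{a..b}. \<forall>v\<in>{a..b}. f u \<le> f v}" by force
  qed
qed

lemma twice_diff_onD:
  assumes "twice_diff_on f S" "x \<in> S"
  shows "(f has_real_derivative deriv f x) (at x)"
    and "(deriv f has_real_derivative deriv (deriv f) x) (at x)"
  using assms unfolding twice_diff_on_def by (auto simp: DERIV_deriv_iff_real_differentiable)

lemma admissible_transmission_deriv_signs:
  assumes "admissible_transmission F" "u \<in> {0<..<1}"
  shows "deriv F u < 0 \<and> deriv (deriv F) u \<le> 0"
proof -
  have "trans_increasing_returns F \<or> trans_constant_returns F"
    using assms(1) unfolding admissible_transmission_def by simp
  then show ?thesis
  proof
    assume "trans_constant_returns F"
    then obtain a b where "b < 0" "\<And>x. x \<in> {0..1} \<Longrightarrow> F x = a + b * x"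
      unfolding trans_constant_returns_def by blast
    then show ?thesis using deriv_affine_on_interval[of 0 1 F a b u] assms(2) by simp
  qed (use assms(2) in \<open>simp add: trans_increasing_returns_def\<close>)
qed

lemma admissible_recovery_deriv_signs:
  assumes "admissible_recovery Fg" "u \<in> {0<..<1}"
  shows "deriv (\<lambda>x. Fg (1 - x)) u < 0 \<and> 0 \<le> deriv (deriv (\<lambda>x. Fg (1 - x))) u"
proof -
  have "recov_increasing_returns Fg \<or> recov_constant_returns Fg"
    using assms(1) unfolding admissible_recovery_def by simp
  then show ?thesis
  proof
    assume "recov_constant_returns Fg"
    then obtain a b where "b > 0" "\<And>x. x \<in> {0..1} \<Longrightarrow> Fg (1 - x) = (a + b) + (- b) * x"
      unfolding recov_constant_returns_def by (fastforce simp: algebra_simps)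
    then show ?thesis
      using deriv_affine_on_interval[of 0 1 "\<lambda>x. Fg (1 - x)" "a + b" "- b" u] assms(2) by simp
  qed (use assms(2) in \<open>simp add: recov_increasing_returns_def\<close>)
qed

lemma R0c_gt_1_iff:
  assumes "0 < \<mu>" "0 < Fg (1 - u)"
  shows "1 < R0c \<mu> F Fg u \<longleftrightarrow> Fg (1 - u) + \<mu> < F u"
  using assms by (simp add: R0c_def)

lemma Istar_no_interior_min:
  assumes "0 < \<mu>" and F: "admissible_transmission F" and Fg: "admissible_recovery Fg"
    and R0c_gt_1: "\<forall>u\<in>{0..1}. 1 < R0c \<mu> F Fg u" and u: "u \<in> {0<..<1}"
  shows "\<exists>v\<in>{0..1}. Istar \<mu> F Fg v < Istar \<mu> F Fg u"
proof -
  define G where "G x = Fg (1 - x)" for x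
  have G_pos: "0 < G x" if "x \<in> {0..1}" for x
    using Fg that unfolding admissible_recovery_def G_def by simp
  have diff: "twice_diff_on F {0<..<1}" "twice_diff_on G {0<..<1}"
    using F Fg unfolding admissible_transmission_def admissible_recovery_def G_def[abs_def] by simp_all
  have "\<exists>v\<in>{0<..<1}. 1 / (G v + \<mu>) - 1 / F v < 1 / (G u + \<mu>) - 1 / F u"
  proof (rule reciprocal_difference_no_interior_min[OF open_greaterThanLessThan u])
    show "(deriv F has_real_derivative deriv (deriv F) u) (at u)"
      "(deriv G has_real_derivative deriv (deriv G) u) (at u)"
      using twice_diff_onD(2)[OF diff(1) u] twice_diff_onD(2)[OF diff(2) u] .
    show "deriv (deriv F) u \<le> 0" "0 \<le> deriv (deriv G) u" "deriv G u \<noteq> 0"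
      using admissible_transmission_deriv_signs[OF F u] admissible_recovery_deriv_signs[OF Fg u]
      unfolding G_def[abs_def] by simp_all
  next
    fix x :: real assume x: "x \<in> {0<..<1}"
    show "(F has_real_derivative deriv F x) (at x)" using twice_diff_onD(1)[OF diff(1) x] .
    show "((\<lambda>x. G x + \<mu>) has_real_derivative deriv G x) (at x)"
      using twice_diff_onD(1)[OF diff(2) x] by (auto intro!: derivative_eq_intros)
    have "x \<in> {0..1}" using x by simp
    then have "0 < G x" by (rule G_pos)
    with \<open>0 < \<mu>\<close> show "0 < G x + \<mu>" by simp
    show "G x + \<mu> < F x"
      using \<open>0 < G x\<close> \<open>x \<in> {0..1}\<close> R0c_gt_1 R0c_gt_1_iff[OF \<open>0 < \<mu>\<close>] unfolding G_def by blast
  qed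
  then obtain v where "v \<in> {0..1}" "1 / (G v + \<mu>) - 1 / F v < 1 / (G u + \<mu>) - 1 / F u"
    using greaterThanLessThan_subseteq_atLeastAtMost_iff by blast
  with \<open>0 < \<mu>\<close> show ?thesis unfolding Istar_def G_def by (auto intro: mult_strict_left_mono)
qed

lemma Istar_continuous_on:
  assumes "0 < \<mu>" "admissible_transmission F" "admissible_recovery Fg"
  shows "continuous_on {0..1} (Istar \<mu> F Fg)"
proof -
  have "continuous_on {0..1} F" "continuous_on {0..1} (\<lambda>u. Fg (1 - u))"
    and "\<forall>u\<in>{0..1}. 0 < F u \<and> 0 < Fg (1 - u)"
    using assms(2,3) unfolding admissible_transmission_def admissible_recovery_def by simp_all
  with \<open>0 < \<mu>\<close> show ?thesis
    unfolding Istar_def[abs_def] by (intro continuous_intros) (auto dest: bspec)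
qed

lemma opt_long_eq_endpoints:
  assumes "0 < \<mu>" "admissible_transmission F" "admissible_recovery Fg"
    and "\<forall>u\<in>{0..1}. 1 < R0c \<mu> F Fg u"
  shows "opt_long \<mu> F Fg =
    {u\<in>{0, 1}. Istar \<mu> F Fg u \<le> Istar \<mu> F Fg 0 \<and> Istar \<mu> F Fg u \<le> Istar \<mu> F Fg 1}"
  unfolding opt_long_def
  using minimizers_at_endpoints[OF _ Istar_continuous_on[OF assms(1-3)] Istar_no_interior_min[OF assms]]
  by simp

theorem proposition1:
  fixes \<mu> :: real and F1 Fg1 F2 Fg2 :: "real \<Rightarrow> real"
  assumes "\<mu> > 0"
    and "admissible_transmission F1" and "admissible_recovery Fg1"
    and "admissible_transmission F2" and "admissible_recovery Fg2"
    and "\<forall>u\<in>{0..1}. R0c \<mu> F1 Fg1 u > 1"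
    and "\<forall>u\<in>{0..1}. R0c \<mu> F2 Fg2 u > 1"
    and "F1 0 = F2 0" and "F1 1 = F2 1"
    and "Fg1 0 = Fg2 0" and "Fg1 1 = Fg2 1"
  shows "(\<not> (\<exists>u\<in>{0<..<1}. \<forall>v\<in>{0..1}. Istar \<mu> F1 Fg1 u \<le> Istar \<mu> F1 Fg1 v))
         \<and> opt_long \<mu> F1 Fg1 \<subseteq> {0, 1}
         \<and> opt_long \<mu> F1 Fg1 = opt_long \<mu> F2 Fg2"
proof (intro conjI)
  show "\<not> (\<exists>u\<in>{0<..<1}. \<forall>v\<in>{0..1}. Istar \<mu> F1 Fg1 u \<le> Istar \<mu> F1 Fg1 v)"
    using Istar_no_interior_min[OF assms(1-3,6)] by (meson not_less)
  show "opt_long \<mu> F1 Fg1 \<subseteq> {0, 1}"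
    unfolding opt_long_eq_endpoints[OF assms(1-3,6)] by blast
  have "Istar \<mu> F1 Fg1 0 = Istar \<mu> F2 Fg2 0" "Istar \<mu> F1 Fg1 1 = Istar \<mu> F2 Fg2 1"
    using assms(8-11) unfolding Istar_def by simp_all
  then show "opt_long \<mu> F1 Fg1 = opt_long \<mu> F2 Fg2"
    unfolding opt_long_eq_endpoints[OF assms(1-3,6)] opt_long_eq_endpoints[OF assms(1,4,5,7)]
    by auto
qed

end
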